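(* Let $(\varphi_n)_{n\ge 0}$ be vectors in $\mathbb{R}^d$ and set $r_0=1$, $r_n=1+\sum_{i=1}^n\|\varphi_i\|^2$ for $n\ge1$. Define $A_n=\varphi_n\varphi_n^\top/r_n$ and the transition matrices $\Phi(i,i)=I$, $\Phi(n+1,i)=(I-A_n)\Phi(n,i)$ for $n\ge i$. Let $(t_k)_{k\ge0}$ be a strictly increasing sequence of integers with $t_0\ge 1$. Set $$S_{t_kt_{k-1}}=\sum_{i=t_{k-1}}^{t_k-1}\varphi_i\varphi_i^\top,\qquad D_k=r_{t_k-1}\left(\log r_{t_k-1}-\log r_{t_{k-1}-1}\right)+r_{t_{k-1}-1}.$$ If $\sum_{k=1}^\infty \lambda_{\min}(S_{t_kt_{k-1}})/D_k=\infty$, then $\Phi(n,0)\to0$ as $n\to\infty$.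
   Context: $\log$ is the natural logarithm, $\|\cdot\|$ the Euclidean norm, $\lambda_{\min}$ the smallest eigenvalue of a symmetric matrix. *)

theory Defs
  imports "HOL-Analysis.Analysis"
begin

definition outer :: "real^'d \<Rightarrow> real^'d \<Rightarrow> real^'d^'d" where
  "outer u v = (\<chi> i j. u $ i * v $ j)"

definition lambda_min :: "real^'d^'d \<Rightarrow> real" where
  "lambda_min M = Min {c. \<exists>v. v \<noteq> 0 \<and> M *v v = c *\<^sub>R v}"

definition rr :: "(nat \<Rightarrow> real^'d) \<Rightarrow> nat \<Rightarrow> real" where
  "rr \<phi> n = 1 + (\<Sum>i=1..n. (norm (\<phi> i))^2)"

definition AA :: "(nat \<Rightarrow> real^'d) \<Rightarrow> nat \<Rightarrow> real^'d^'d" where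
  "AA \<phi> n = (1 / rr \<phi> n) *\<^sub>R outer (\<phi> n) (\<phi> n)"

text \<open>trans_from phi i k = Phi(i+k, i).\<close>
fun trans_from :: "(nat \<Rightarrow> real^'d) \<Rightarrow> nat \<Rightarrow> nat \<Rightarrow> real^'d^'d" where
  "trans_from \<phi> i 0 = mat 1"
| "trans_from \<phi> i (Suc k) = (mat 1 - AA \<phi> (i + k)) ** trans_from \<phi> i k"

definition Phi :: "(nat \<Rightarrow> real^'d) \<Rightarrow> nat \<Rightarrow> nat \<Rightarrow> real^'d^'d" where
  "Phi \<phi> n i = trans_from \<phi> i (n - i)"

definition SS :: "(nat \<Rightarrow> real^'d) \<Rightarrow> (nat \<Rightarrow> nat) \<Rightarrow> nat \<Rightarrow> real^'d^'d" where
  "SS \<phi> t k = (\<Sum>i\<in>{t (k - 1)..<t k}. outer (\<phi> i) (\<phi> i))"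

definition DD :: "(nat \<Rightarrow> real^'d) \<Rightarrow> (nat \<Rightarrow> nat) \<Rightarrow> nat \<Rightarrow> real" where
  "DD \<phi> t k = rr \<phi> (t k - 1) * (ln (rr \<phi> (t k - 1)) - ln (rr \<phi> (t (k - 1) - 1)))
              + rr \<phi> (t (k - 1) - 1)"

end

(* Fix v and let x_n = Phi(n,0) v, so that x_(n+1) = x_n - (phi_n . x_n / r_n) phi_n.
   For n >= 1 we have |phi_n|^2 <= r_n, hence |x_(n+1)|^2 <= |x_n|^2 - (phi_n . x_n)^2 / r_n:
   the energy |x_n|^2 decreases to a limit c, and on a block [a, b) it drops by at least the
   dissipation E = sum_(a <= j < b) (phi_j . x_j)^2 / r_j.  Writing x_b = x_i - sum_(i <= j < b)
   (phi_j . x_j / r_j) phi_j and using Cauchy-Schwarz together with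
   sum_(a <= j < b) |phi_j|^2 / r_j <= log r_(b-1) - log r_(a-1), one gets for a = t_(k-1), b = t_k
     lambda_min(S_k) |x_(t_k)|^2 <= x_(t_k)^T S_k x_(t_k) <= 4 D_k (|x_(t_(k-1))|^2 - |x_(t_k)|^2).
   If c > 0, the partial sums of lambda_min(S_k) / D_k are therefore bounded by 4 |x_(t_0)|^2 / c,
   contradicting their divergence; so c = 0 and x_n -> 0 for every v. *)

theory Submission
  imports Defs
begin

section \<open>Symmetric matrices and their least eigenvalue\<close>

lemma outer_mult_vec: "outer u v *v y = (v \<bullet> y) *\<^sub>R (u::real^'d)"
  by (simp add: vec_eq_iff outer_def matrix_vector_mult_def inner_vec_def sum_distrib_left
      mult.commute mult.left_commute)

lemma scaleR_matrix_vector_mult: "(c *\<^sub>R A) *v (x::real^'n) = c *\<^sub>R (A *v x)"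
  by (simp add: vec_eq_iff matrix_vector_mult_def sum_distrib_left mult.assoc)

lemma transpose_sum_outer: "transpose (\<Sum>i\<in>I. outer (f i) (f i)) = (\<Sum>i\<in>I. outer (f i) (f i))"
  by (simp add: vec_eq_iff transpose_def outer_def sum_component mult.commute)

lemma sum_matrix_vector_mult: "(\<Sum>i\<in>I. A i) *v (x::real^'n) = (\<Sum>i\<in>I. A i *v x)"
  by (induction I rule: infinite_finite_induct) (simp_all add: matrix_vector_mult_add_rdistrib)

lemma quadratic_form_sum_outer:
  "v \<bullet> ((\<Sum>i\<in>I. outer (f i) (f i)) *v v) = (\<Sum>i\<in>I. (f i \<bullet> v)\<^sup>2)"
  by (simp add: sum_matrix_vector_mult outer_mult_vec inner_sum_right inner_commute power2_eq_square)

lemma symmetric_matrix_inner: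
  fixes M :: "real^'n^'n"
  assumes "transpose M = M"
  shows "(M *v v) \<bullet> w = v \<bullet> (M *v w)"
  by (metis assms dot_lmul_matrix transpose_matrix_vector)

lemma quadratic_nonneg_imp_linear_coeff_zero:
  fixes a b :: real
  assumes "\<And>e. 0 \<le> 2 * e * a + e\<^sup>2 * b"
  shows "a = 0"
proof -
  define m where "m = \<bar>b\<bar> + 1"
  have m: "m > 0" unfolding m_def by linarith
  have "0 \<le> 2 * (- a / m) * a + (- a / m)\<^sup>2 * b" by (rule assms(1))
  also have "\<dots> = a\<^sup>2 * (b - 2 * m) / m\<^sup>2"
    using m by (simp add: field_simps power2_eq_square)
  finally have "0 \<le> a\<^sup>2 * (b - 2 * m)" using m by (simp add: zero_le_divide_iff)
  moreover have "b - 2 * m < 0" unfolding m_def by (simp add: abs_if)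
  ultimately show "a = 0" by (simp add: zero_le_mult_iff)
qed

lemma rayleigh_minimizer_eigenvector:
  fixes M :: "real^'n^'n"
  assumes sym: "transpose M = M"
    and lower: "\<And>v. c * (norm v)\<^sup>2 \<le> v \<bullet> (M *v v)"
    and attained: "u \<bullet> (M *v u) = c * (norm u)\<^sup>2"
  shows "M *v u = c *\<^sub>R u"
proof -
  define q where "q v = v \<bullet> (M *v v) - c * (norm v)\<^sup>2" for v
  define w where "w = M *v u - c *\<^sub>R u"
  have expand: "q (u + e *\<^sub>R w) = 2 * e * (w \<bullet> w) + e\<^sup>2 * q w" for e
  proof -
    have "u \<bullet> (M *v w) = w \<bullet> (M *v u)"
      using symmetric_matrix_inner[OF sym, of w u] by (simp add: inner_commute)
    then have "(u + e *\<^sub>R w) \<bullet> (M *v (u + e *\<^sub>R w))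
        = u \<bullet> (M *v u) + 2 * e * (w \<bullet> (M *v u)) + e\<^sup>2 * (w \<bullet> (M *v w))"
      by (simp add: matrix_vector_right_distrib matrix_vector_mult_scaleR inner_add_left
          inner_add_right power2_eq_square algebra_simps)
    moreover have "(norm (u + e *\<^sub>R w))\<^sup>2 = (norm u)\<^sup>2 + 2 * e * (w \<bullet> u) + e\<^sup>2 * (norm w)\<^sup>2"
      unfolding power2_norm_eq_inner
      by (simp add: inner_add_left inner_add_right inner_commute power2_eq_square algebra_simps)
    moreover have "w \<bullet> (M *v u) = w \<bullet> w + c * (w \<bullet> u)"
      unfolding w_def by (simp add: inner_diff_right)
    ultimately show ?thesis unfolding q_def using attained by (simp add: algebra_simps)
  qed
  have "0 \<le> 2 * e * (w \<bullet> w) + e\<^sup>2 * q w" for e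
    using lower[of "u + e *\<^sub>R w"] expand[of e] unfolding q_def by linarith
  then have "w \<bullet> w = 0" by (rule quadratic_nonneg_imp_linear_coeff_zero)
  then show ?thesis unfolding w_def by simp
qed

lemma symmetric_min_eigenvalue:
  fixes M :: "real^'n^'n"
  assumes sym: "transpose M = M"
  obtains c u where "u \<noteq> 0" "M *v u = c *\<^sub>R u" "\<And>v. c * (norm v)\<^sup>2 \<le> v \<bullet> (M *v v)"
proof -
  define q where "q v = v \<bullet> (M *v v)" for v
  have "continuous_on (sphere 0 1) q" unfolding q_def by (intro continuous_intros)
  moreover have "sphere (0::real^'n) 1 \<noteq> {}" using vector_choose_size[of 1] by auto
  ultimately obtain u where u: "u \<in> sphere 0 1" and min: "\<And>v. v \<in> sphere 0 1 \<Longrightarrow> q u \<le> q v"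
    using continuous_attains_inf[OF compact_sphere] by blast
  have lower: "q u * (norm v)\<^sup>2 \<le> q v" for v
  proof (cases "v = 0")
    case False
    have "q u \<le> q ((1 / norm v) *\<^sub>R v)" using False by (intro min) simp
    also have "\<dots> = q v / (norm v)\<^sup>2"
      unfolding q_def by (simp add: matrix_vector_mult_scaleR power2_eq_square)
    finally show ?thesis using False by (simp add: field_simps)
  qed (simp add: q_def)
  have "M *v u = q u *\<^sub>R u"
    using u lower by (intro rayleigh_minimizer_eigenvector[OF sym]) (auto simp: q_def)
  moreover have "u \<noteq> 0" using u by auto
  ultimately show ?thesis using that lower unfolding q_def by blast
qed

lemma symmetric_eigenvalues_finite:
  fixes M :: "real^'n^'n"
  assumes sym: "transpose M = M"
  shows "finite {c. \<exists>v. v \<noteq> 0 \<and> M *v v = c *\<^sub>R v}"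
proof -
  define E where "E = {c. \<exists>v. v \<noteq> 0 \<and> M *v v = c *\<^sub>R v}"
  define g where "g c = (SOME v. v \<noteq> 0 \<and> M *v v = c *\<^sub>R v)" for c
  have g: "g c \<noteq> 0" "M *v g c = c *\<^sub>R g c" if "c \<in> E" for c
    using someI_ex[of "\<lambda>v. v \<noteq> 0 \<and> M *v v = c *\<^sub>R v"] that unfolding E_def g_def by auto
  have orth: "g c \<bullet> g c' = 0" if "c \<in> E" "c' \<in> E" "c \<noteq> c'" for c c'
  proof -
    have "c * (g c \<bullet> g c') = (M *v g c) \<bullet> g c'" using g(2)[OF that(1)] by simp
    also have "\<dots> = c' * (g c \<bullet> g c')"
      using g(2)[OF that(2)] by (simp add: symmetric_matrix_inner[OF sym])
    finally show ?thesis using that(3) by simp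
  qed
  have "inj_on g E"
  proof (rule inj_onI)
    fix c c' assume "c \<in> E" "c' \<in> E" "g c = g c'"
    then show "c = c'" using orth[of c c'] g(1)[of c] by auto
  qed
  moreover have "pairwise orthogonal (g ` E)"
    using orth unfolding pairwise_def orthogonal_def by blast
  then have "independent (g ` E)"
    using g(1) by (intro pairwise_orthogonal_independent) auto
  then have "finite (g ` E)" by (rule independent_imp_finite)
  ultimately show ?thesis unfolding E_def[symmetric] by (rule finite_imageD[rotated])
qed

lemma lambda_min_le_quadratic_form:
  fixes M :: "real^'n^'n"
  assumes sym: "transpose M = M"
  shows "lambda_min M * (norm v)\<^sup>2 \<le> v \<bullet> (M *v v)"
proof -
  obtain c u where u: "u \<noteq> 0" "M *v u = c *\<^sub>R u" and lower: "\<And>v. c * (norm v)\<^sup>2 \<le> v \<bullet> (M *v v)"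
    using symmetric_min_eigenvalue[OF sym] by blast
  have "lambda_min M \<le> c"
    unfolding lambda_min_def using symmetric_eigenvalues_finite[OF sym] u by (intro Min_le) auto
  then show ?thesis using lower[of v] by (meson mult_right_mono order_trans zero_le_power2)
qed

section \<open>The normalising sequence r\<close>

lemma rr_ge_1: "1 \<le> rr \<phi> n"
  unfolding rr_def by (simp add: sum_nonneg)

lemma rr_pos: "0 < rr \<phi> n"
  using rr_ge_1[of \<phi> n] by linarith

lemma rr_Suc: "rr \<phi> (Suc n) = rr \<phi> n + (norm (\<phi> (Suc n)))\<^sup>2"
  unfolding rr_def by simp

lemma rr_eq_rr_pred: "1 \<le> n \<Longrightarrow> rr \<phi> n = rr \<phi> (n - 1) + (norm (\<phi> n))\<^sup>2"
  using rr_Suc[of \<phi> "n - 1"] by simp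

lemma rr_mono: "m \<le> n \<Longrightarrow> rr \<phi> m \<le> rr \<phi> n"
proof (induction n rule: dec_induct)
  case (step n)
  then show ?case using rr_Suc[of \<phi> n] zero_le_power2[of "norm (\<phi> (Suc n))"] by linarith
qed simp

lemma sum_norm_sq_eq_rr_diff:
  assumes "1 \<le> a" "a \<le> b"
  shows "(\<Sum>j\<in>{a..<b}. (norm (\<phi> j))\<^sup>2) = rr \<phi> (b - 1) - rr \<phi> (a - 1)"
  using assms(2)
proof (induction b rule: dec_induct)
  case (step n)
  then show ?case using rr_eq_rr_pred[of n \<phi>] assms(1) by simp
qed simp

lemma diff_div_le_ln_diff:
  fixes s R :: real
  assumes "0 < s" "0 < R"
  shows "(R - s) / R \<le> ln R - ln s"
proof -
  have "ln (s / R) \<le> s / R - 1" using assms by (intro ln_le_minus_one) simp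
  then show ?thesis using assms by (simp add: ln_div diff_divide_distrib)
qed

lemma sum_norm_sq_div_rr_le_ln_diff:
  assumes "1 \<le> a" "a \<le> b"
  shows "(\<Sum>j\<in>{a..<b}. (norm (\<phi> j))\<^sup>2 / rr \<phi> j) \<le> ln (rr \<phi> (b - 1)) - ln (rr \<phi> (a - 1))"
  using assms(2)
proof (induction b rule: dec_induct)
  case (step n)
  have "(norm (\<phi> n))\<^sup>2 / rr \<phi> n = (rr \<phi> n - rr \<phi> (n - 1)) / rr \<phi> n"
    using rr_eq_rr_pred[of n \<phi>] step.hyps assms(1) by simp
  also have "\<dots> \<le> ln (rr \<phi> n) - ln (rr \<phi> (n - 1))"
    by (intro diff_div_le_ln_diff rr_pos)
  finally show ?case using step by simp
qed simp

lemma weighted_Cauchy_Schwarz: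
  fixes u :: "'a::real_inner"
  assumes r: "\<And>j. j \<in> J \<Longrightarrow> 0 < r j"
  shows "(\<Sum>j\<in>J. p j / r j * (u \<bullet> f j))\<^sup>2
    \<le> (norm u)\<^sup>2 * ((\<Sum>j\<in>J. (p j)\<^sup>2 / r j) * (\<Sum>j\<in>J. (norm (f j))\<^sup>2 / r j))"
proof -
  define \<alpha> where "\<alpha> j = \<bar>p j\<bar> / sqrt (r j)" for j
  define \<beta> where "\<beta> j = norm u * norm (f j) / sqrt (r j)" for j
  have "\<bar>p j / r j * (u \<bullet> f j)\<bar> \<le> \<alpha> j * \<beta> j" if "j \<in> J" for j
  proof -
    have "\<bar>p j / r j * (u \<bullet> f j)\<bar> \<le> \<bar>p j\<bar> / r j * (norm u * norm (f j))"
      using r[OF that] Cauchy_Schwarz_ineq2[of u "f j"]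
      by (simp add: abs_mult divide_right_mono mult_left_mono)
    also have "\<dots> = \<alpha> j * \<beta> j"
      unfolding \<alpha>_def \<beta>_def using r[OF that] by (simp add: field_simps)
    finally show ?thesis .
  qed
  then have "\<bar>\<Sum>j\<in>J. p j / r j * (u \<bullet> f j)\<bar> \<le> (\<Sum>j\<in>J. \<alpha> j * \<beta> j)"
    by (rule order_trans[OF sum_abs sum_mono])
  then have "(\<Sum>j\<in>J. p j / r j * (u \<bullet> f j))\<^sup>2 \<le> (\<Sum>j\<in>J. \<alpha> j * \<beta> j)\<^sup>2"
    by (metis abs_ge_zero power2_abs power_mono)
  also have "\<dots> \<le> (\<Sum>j\<in>J. (\<alpha> j)\<^sup>2) * (\<Sum>j\<in>J. (\<beta> j)\<^sup>2)"
    by (rule Cauchy_Schwarz_ineq_sum)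
  also have "(\<Sum>j\<in>J. (\<alpha> j)\<^sup>2) = (\<Sum>j\<in>J. (p j)\<^sup>2 / r j)"
    unfolding \<alpha>_def using r by (intro sum.cong) (auto simp: power_divide less_imp_le)
  also have "(\<Sum>j\<in>J. (\<beta> j)\<^sup>2) = (norm u)\<^sup>2 * (\<Sum>j\<in>J. (norm (f j))\<^sup>2 / r j)"
    unfolding \<beta>_def sum_distrib_left using r
    by (intro sum.cong) (auto simp: power_divide power_mult_distrib less_imp_le)
  finally show ?thesis by (simp add: ac_simps)
qed

lemma DD_ge_1:
  assumes "t (k - 1) \<le> t k"
  shows "1 \<le> DD \<phi> t k"
proof -
  have "rr \<phi> (t (k - 1) - 1) \<le> rr \<phi> (t k - 1)" using assms by (intro rr_mono) simp
  then have "0 \<le> rr \<phi> (t k - 1) * (ln (rr \<phi> (t k - 1)) - ln (rr \<phi> (t (k - 1) - 1)))"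
    using rr_pos[of \<phi>] by (simp add: less_imp_le)
  then show ?thesis unfolding DD_def using rr_ge_1[of \<phi> "t (k - 1) - 1"] by linarith
qed

section \<open>Energy decay along the transition orbit\<close>

locale transition_orbit =
  fixes \<phi> x :: "nat \<Rightarrow> real^'d"
  assumes x_Suc: "x (Suc n) = x n - ((\<phi> n \<bullet> x n) / rr \<phi> n) *\<^sub>R \<phi> n"
begin

definition dissipation :: "nat \<Rightarrow> nat \<Rightarrow> real" where
  "dissipation a b = (\<Sum>j\<in>{a..<b}. (\<phi> j \<bullet> x j)\<^sup>2 / rr \<phi> j)"

lemma dissipation_nonneg: "0 \<le> dissipation a b"
  unfolding dissipation_def by (intro sum_nonneg divide_nonneg_pos rr_pos) simp

lemma norm_sq_Suc_le:
  assumes "1 \<le> n" \<comment> \<open>for n = 0 it fails, as r_0 = 1 need not dominate |phi_0|^2; hence t_0 >= 1\<close>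
  shows "(norm (x (Suc n)))\<^sup>2 \<le> (norm (x n))\<^sup>2 - (\<phi> n \<bullet> x n)\<^sup>2 / rr \<phi> n"
proof -
  define p where "p = \<phi> n \<bullet> x n"
  define r where "r = rr \<phi> n"
  have r: "0 < r" unfolding r_def by (rule rr_pos)
  have "(norm (\<phi> n))\<^sup>2 \<le> r"
    using rr_eq_rr_pred[OF assms, of \<phi>] rr_ge_1[of \<phi> "n - 1"] unfolding r_def by linarith
  then have "p\<^sup>2 / r * ((norm (\<phi> n))\<^sup>2 / r) \<le> p\<^sup>2 / r"
    using r by (intro mult_left_le) simp_all
  moreover have "(norm (x (Suc n)))\<^sup>2 = (norm (x n))\<^sup>2 - 2 * (p\<^sup>2 / r) + p\<^sup>2 / r * ((norm (\<phi> n))\<^sup>2 / r)"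
    unfolding x_Suc power2_norm_eq_inner p_def r_def
    by (simp add: inner_diff_left inner_diff_right inner_commute power2_eq_square field_simps)
  ultimately show ?thesis unfolding p_def r_def by linarith
qed

lemma dissipation_le:
  assumes "1 \<le> a" "a \<le> b"
  shows "dissipation a b \<le> (norm (x a))\<^sup>2 - (norm (x b))\<^sup>2"
  using assms(2) unfolding dissipation_def
proof (induction b rule: dec_induct)
  case (step n)
  then show ?case using norm_sq_Suc_le[of n] assms(1) by simp
qed simp

lemma diff_eq_sum:
  assumes "a \<le> b"
  shows "x a - x b = (\<Sum>j\<in>{a..<b}. ((\<phi> j \<bullet> x j) / rr \<phi> j) *\<^sub>R \<phi> j)"
  using assms
proof (induction b rule: dec_induct)
  case (step n)
  then show ?case using x_Suc[of n] by (simp add: algebra_simps)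
qed simp

lemma correction_sq_le:
  assumes "1 \<le> a" "a \<le> i" "i \<le> b"
  shows "(\<Sum>j\<in>{i..<b}. (\<phi> j \<bullet> x j) / rr \<phi> j * (u \<bullet> \<phi> j))\<^sup>2
    \<le> (norm u)\<^sup>2 * (dissipation a b * (ln (rr \<phi> (b - 1)) - ln (rr \<phi> (a - 1))))"
proof -
  have "(\<Sum>j\<in>{i..<b}. (\<phi> j \<bullet> x j) / rr \<phi> j * (u \<bullet> \<phi> j))\<^sup>2
      \<le> (norm u)\<^sup>2 * ((\<Sum>j\<in>{i..<b}. (\<phi> j \<bullet> x j)\<^sup>2 / rr \<phi> j)
        * (\<Sum>j\<in>{i..<b}. (norm (\<phi> j))\<^sup>2 / rr \<phi> j))"
    by (rule weighted_Cauchy_Schwarz[OF rr_pos])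
  also have "\<dots> \<le> (norm u)\<^sup>2 * (dissipation a b * (ln (rr \<phi> (b - 1)) - ln (rr \<phi> (a - 1))))"
  proof (intro mult_left_mono mult_mono)
    show "(\<Sum>j\<in>{i..<b}. (\<phi> j \<bullet> x j)\<^sup>2 / rr \<phi> j) \<le> dissipation a b"
      unfolding dissipation_def using assms(2)
      by (intro sum_mono2) (auto intro!: divide_nonneg_pos rr_pos)
    have "(\<Sum>j\<in>{i..<b}. (norm (\<phi> j))\<^sup>2 / rr \<phi> j) \<le> (\<Sum>j\<in>{a..<b}. (norm (\<phi> j))\<^sup>2 / rr \<phi> j)"
      using assms(2) by (intro sum_mono2) (auto intro!: divide_nonneg_pos rr_pos)
    then show "(\<Sum>j\<in>{i..<b}. (norm (\<phi> j))\<^sup>2 / rr \<phi> j) \<le> ln (rr \<phi> (b - 1)) - ln (rr \<phi> (a - 1))"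
      using sum_norm_sq_div_rr_le_ln_diff[of a b \<phi>] assms by linarith
  qed (auto intro!: dissipation_nonneg sum_nonneg divide_nonneg_pos rr_pos)
  finally show ?thesis .
qed

lemma inner_end_sq_le:
  assumes "1 \<le> a" "a \<le> i" "i < b"
  shows "(\<phi> i \<bullet> x b)\<^sup>2 \<le> 2 * rr \<phi> (b - 1) * ((\<phi> i \<bullet> x i)\<^sup>2 / rr \<phi> i)
    + 2 * (norm (\<phi> i))\<^sup>2 * (dissipation a b * (ln (rr \<phi> (b - 1)) - ln (rr \<phi> (a - 1))))"
proof -
  define \<sigma> where "\<sigma> = (\<Sum>j\<in>{i..<b}. (\<phi> j \<bullet> x j) / rr \<phi> j * (\<phi> i \<bullet> \<phi> j))"
  have "x b = x i - (\<Sum>j\<in>{i..<b}. ((\<phi> j \<bullet> x j) / rr \<phi> j) *\<^sub>R \<phi> j)"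
    using diff_eq_sum[of i b] assms(3) by (simp add: algebra_simps)
  then have "\<phi> i \<bullet> x b = \<phi> i \<bullet> x i - \<sigma>"
    unfolding \<sigma>_def by (simp add: inner_diff_right inner_sum_right)
  then have "(\<phi> i \<bullet> x b)\<^sup>2 \<le> 2 * (\<phi> i \<bullet> x i)\<^sup>2 + 2 * \<sigma>\<^sup>2"
    using zero_le_power2[of "\<phi> i \<bullet> x i + \<sigma>"] by (simp add: power2_diff power2_sum)
  moreover have "(\<phi> i \<bullet> x i)\<^sup>2 \<le> rr \<phi> (b - 1) * ((\<phi> i \<bullet> x i)\<^sup>2 / rr \<phi> i)"
  proof -
    have "rr \<phi> i \<le> rr \<phi> (b - 1)" using assms(3) by (intro rr_mono) simp
    from mult_right_mono[OF this zero_le_power2[of "\<phi> i \<bullet> x i"]]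
    show ?thesis using rr_pos[of \<phi> i] by (simp add: le_divide_eq mult.commute)
  qed
  moreover have "\<sigma>\<^sup>2 \<le> (norm (\<phi> i))\<^sup>2 * (dissipation a b * (ln (rr \<phi> (b - 1)) - ln (rr \<phi> (a - 1))))"
    unfolding \<sigma>_def using assms by (intro correction_sq_le) simp_all
  ultimately show ?thesis by (simp add: algebra_simps)
qed

lemma sum_inner_end_sq_le:
  assumes "1 \<le> a" "a \<le> b"
  shows "(\<Sum>i\<in>{a..<b}. (\<phi> i \<bullet> x b)\<^sup>2) \<le> 4 * (rr \<phi> (b - 1) * (ln (rr \<phi> (b - 1)) - ln (rr \<phi> (a - 1)))
    + rr \<phi> (a - 1)) * dissipation a b"
proof -
  define R where "R = rr \<phi> (b - 1)"
  define s where "s = rr \<phi> (a - 1)"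
  define L where "L = ln R - ln s"
  define E where "E = dissipation a b"
  have s: "0 < s" "s \<le> R" unfolding s_def R_def using assms(2) by (auto intro: rr_pos rr_mono)
  then have L: "0 \<le> L" "R - s \<le> R * L"
    using diff_div_le_ln_diff[of s R] unfolding L_def by (simp_all add: divide_le_eq mult.commute)
  have "(\<Sum>i\<in>{a..<b}. (\<phi> i \<bullet> x b)\<^sup>2)
      \<le> (\<Sum>i\<in>{a..<b}. 2 * R * ((\<phi> i \<bullet> x i)\<^sup>2 / rr \<phi> i) + 2 * E * L * (norm (\<phi> i))\<^sup>2)"
    using inner_end_sq_le[OF assms(1)] unfolding R_def s_def L_def E_def
    by (intro sum_mono) (simp add: ac_simps)
  also have "\<dots> = 2 * R * E + 2 * E * L * (R - s)"
  proof -
    have "(\<Sum>i\<in>{a..<b}. 2 * R * ((\<phi> i \<bullet> x i)\<^sup>2 / rr \<phi> i)) = 2 * R * E"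
      unfolding E_def dissipation_def by (simp add: sum_distrib_left)
    moreover have "(\<Sum>i\<in>{a..<b}. 2 * E * L * (norm (\<phi> i))\<^sup>2) = 2 * E * L * (R - s)"
      unfolding R_def s_def by (simp add: sum_distrib_left[symmetric] sum_norm_sq_eq_rr_diff[OF assms])
    ultimately show ?thesis by (simp add: sum.distrib)
  qed
  also have "\<dots> = (2 * R + 2 * (L * (R - s))) * E" by (simp add: algebra_simps)
  also have "\<dots> \<le> 4 * (R * L + s) * E" \<comment> \<open>D_k = R L + s dominates both R and L (R - s)\<close>
  proof (rule mult_right_mono)
    have "L * (R - s) \<le> R * L" using mult_left_mono[of "R - s" R L] L s by (simp add: mult.commute)
    then show "2 * R + 2 * (L * (R - s)) \<le> 4 * (R * L + s)" using L s by argo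
  qed (simp add: E_def dissipation_nonneg)
  finally show ?thesis unfolding R_def s_def L_def E_def .
qed

lemma lambda_min_SS_le:
  assumes "1 \<le> t (k - 1)" "t (k - 1) \<le> t k"
  shows "lambda_min (SS \<phi> t k) * (norm (x (t k)))\<^sup>2
    \<le> 4 * DD \<phi> t k * ((norm (x (t (k - 1))))\<^sup>2 - (norm (x (t k)))\<^sup>2)"
proof -
  have "lambda_min (SS \<phi> t k) * (norm (x (t k)))\<^sup>2 \<le> x (t k) \<bullet> (SS \<phi> t k *v x (t k))"
    by (rule lambda_min_le_quadratic_form) (simp add: SS_def transpose_sum_outer)
  also have "\<dots> = (\<Sum>i\<in>{t (k - 1)..<t k}. (\<phi> i \<bullet> x (t k))\<^sup>2)"
    by (simp add: SS_def quadratic_form_sum_outer)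
  also have "\<dots> \<le> 4 * DD \<phi> t k * dissipation (t (k - 1)) (t k)"
    unfolding DD_def by (rule sum_inner_end_sq_le[OF assms])
  also have "\<dots> \<le> 4 * DD \<phi> t k * ((norm (x (t (k - 1))))\<^sup>2 - (norm (x (t k)))\<^sup>2)"
    using DD_ge_1[OF assms(2), of \<phi>] by (intro mult_left_mono dissipation_le[OF assms]) simp
  finally show ?thesis .
qed

lemma norm_sq_Suc_decseq: "decseq (\<lambda>n. (norm (x (Suc n)))\<^sup>2)"
proof (rule decseq_SucI)
  fix n
  have "0 \<le> (\<phi> (Suc n) \<bullet> x (Suc n))\<^sup>2 / rr \<phi> (Suc n)" by (simp add: rr_pos less_imp_le)
  then show "(norm (x (Suc (Suc n))))\<^sup>2 \<le> (norm (x (Suc n)))\<^sup>2"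
    using norm_sq_Suc_le[of "Suc n"] by linarith
qed

lemma lambda_min_div_DD_le:
  assumes t: "1 \<le> t (k - 1)" "t (k - 1) \<le> t k"
    and c: "0 < c" "c \<le> (norm (x (t k)))\<^sup>2"
  shows "lambda_min (SS \<phi> t k) / DD \<phi> t k
    \<le> 4 / c * ((norm (x (t (k - 1))))\<^sup>2 - (norm (x (t k)))\<^sup>2)"
proof -
  define lmin where "lmin = lambda_min (SS \<phi> t k)"
  define \<Delta> where "\<Delta> = (norm (x (t (k - 1))))\<^sup>2 - (norm (x (t k)))\<^sup>2"
  have D: "1 \<le> DD \<phi> t k" by (rule DD_ge_1[OF t(2)])
  have "lmin * c \<le> 4 * DD \<phi> t k * \<Delta>"
  proof (cases "0 \<le> lmin")
    case True
    have "lmin * c \<le> lmin * (norm (x (t k)))\<^sup>2" using c(2) True by (rule mult_left_mono)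
    also have "\<dots> \<le> 4 * DD \<phi> t k * \<Delta>" unfolding lmin_def \<Delta>_def by (rule lambda_min_SS_le[OF t])
    finally show ?thesis .
  next
    case False
    have "0 \<le> \<Delta>" using dissipation_le[OF t] dissipation_nonneg[of "t (k - 1)" "t k"]
      unfolding \<Delta>_def by linarith
    then have "0 \<le> 4 * DD \<phi> t k * \<Delta>" using D by simp
    moreover have "lmin * c \<le> 0" using False c(1) by (simp add: mult_nonpos_nonneg)
    ultimately show ?thesis by linarith
  qed
  then show ?thesis using D c(1) unfolding lmin_def \<Delta>_def by (simp add: field_simps)
qed

lemma sum_lambda_min_div_DD_le:
  assumes t: "strict_mono t" "1 \<le> t 0"
    and c: "0 < c" "\<And>n. 1 \<le> n \<Longrightarrow> c \<le> (norm (x n))\<^sup>2"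
  shows "(\<Sum>k=1..K. lambda_min (SS \<phi> t k) / DD \<phi> t k) \<le> 4 / c * (norm (x (t 0)))\<^sup>2"
proof -
  define N where "N n = (norm (x n))\<^sup>2" for n
  have t_ge_1: "1 \<le> t j" for j using t(2) strict_mono_leD[OF t(1), of 0 j] by simp
  have t_le: "t (k - 1) \<le> t k" for k using t(1) by (simp add: strict_mono_leD)
  have telescope: "(\<Sum>k=1..K. g (k - 1) - g k) = g 0 - g K" for g :: "nat \<Rightarrow> real"
    by (induction K) simp_all
  have "(\<Sum>k=1..K. lambda_min (SS \<phi> t k) / DD \<phi> t k)
      \<le> (\<Sum>k=1..K. 4 / c * (N (t (k - 1)) - N (t k)))"
    unfolding N_def using c t_ge_1 by (intro sum_mono lambda_min_div_DD_le t_le) auto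
  also have "\<dots> = 4 / c * (\<Sum>k=1..K. N (t (k - 1)) - N (t k))"
    by (rule sum_distrib_left[symmetric])
  also have "\<dots> = 4 / c * (N (t 0) - N (t K))"
    using telescope[of "\<lambda>k. N (t k)"] by simp
  also have "\<dots> \<le> 4 / c * N (t 0)"
    using c(1) by (intro mult_left_mono) (simp_all add: N_def)
  finally show ?thesis unfolding N_def .
qed

lemma tendsto_zero:
  assumes t: "strict_mono t" "1 \<le> t 0"
    and div: "filterlim (\<lambda>N. \<Sum>k=1..N. lambda_min (SS \<phi> t k) / DD \<phi> t k) at_top sequentially"
  shows "x \<longlonglongrightarrow> 0"
proof -
  define N where "N n = (norm (x n))\<^sup>2" for n
  obtain c where lim: "(\<lambda>n. N (Suc n)) \<longlonglongrightarrow> c" and c: "\<And>n. c \<le> N (Suc n)"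
    using decseq_convergent[OF norm_sq_Suc_decseq, of 0] unfolding N_def by auto
  have "c \<le> 0"
  proof (rule ccontr)
    assume "\<not> c \<le> 0"
    moreover have "c \<le> N n" if "1 \<le> n" for n using c[of "n - 1"] that by simp
    ultimately have bounded: "(\<Sum>k=1..K. lambda_min (SS \<phi> t k) / DD \<phi> t k) \<le> 4 / c * N (t 0)" for K
      unfolding N_def by (intro sum_lambda_min_div_DD_le[OF t]) auto
    obtain K where "4 / c * N (t 0) + 1 \<le> (\<Sum>k=1..K. lambda_min (SS \<phi> t k) / DD \<phi> t k)"
      using div by (auto simp: filterlim_at_top eventually_sequentially)
    then show False using bounded[of K] by linarith
  qed
  moreover have "0 \<le> c" using lim by (rule LIMSEQ_le_const) (auto simp: N_def)
  ultimately have "(\<lambda>n. sqrt (N (Suc n))) \<longlonglongrightarrow> 0"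
    using tendsto_real_sqrt[OF lim] by simp
  then have "(\<lambda>n. norm (x (Suc n))) \<longlonglongrightarrow> 0" by (simp add: N_def)
  then show ?thesis by (rule LIMSEQ_imp_Suc[OF tendsto_norm_zero_cancel])
qed

end

lemma trans_from_orbit: "transition_orbit \<phi> (\<lambda>n. trans_from \<phi> 0 n *v v)"
proof
  fix n
  show "trans_from \<phi> 0 (Suc n) *v v = trans_from \<phi> 0 n *v v
    - ((\<phi> n \<bullet> (trans_from \<phi> 0 n *v v)) / rr \<phi> n) *\<^sub>R \<phi> n"
    by (simp add: matrix_vector_mul_assoc[symmetric] matrix_vector_mult_diff_rdistrib AA_def
        scaleR_matrix_vector_mult outer_mult_vec)
qed

lemma tendsto_matrix_zeroI:
  fixes A :: "nat \<Rightarrow> real^'n^'m"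
  assumes "\<And>v. (\<lambda>n. A n *v v) \<longlonglongrightarrow> 0"
  shows "A \<longlonglongrightarrow> 0"
proof (intro vec_tendstoI)
  fix i j
  have "(\<lambda>n. (A n *v axis j 1) $ i) \<longlonglongrightarrow> 0 $ i"
    by (rule tendsto_vec_nth[OF assms])
  then show "(\<lambda>n. A n $ i $ j) \<longlonglongrightarrow> 0 $ i $ j"
    by (simp add: matrix_vector_mult_basis column_def)
qed

theorem mainTheorem3:
  fixes \<phi> :: "nat \<Rightarrow> real^'d" and t :: "nat \<Rightarrow> nat"
  assumes "strict_mono t" and "t 0 \<ge> 1"
    and "filterlim (\<lambda>N. \<Sum>k=1..N. lambda_min (SS \<phi> t k) / DD \<phi> t k) at_top sequentially"
  shows "(\<lambda>n. Phi \<phi> n 0) \<longlonglongrightarrow> 0"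
proof (rule tendsto_matrix_zeroI)
  fix v
  interpret transition_orbit \<phi> "\<lambda>n. trans_from \<phi> 0 n *v v" by (rule trans_from_orbit)
  show "(\<lambda>n. Phi \<phi> n 0 *v v) \<longlonglongrightarrow> 0"
    using tendsto_zero[OF assms] by (simp add: Phi_def)
qed

end
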